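(* Let $p$ be a stochastic choice function on $X$ and let $M\in\mathcal N$. The following are equivalent: (i) for every MSC $\langle Q,\nu\rangle$ rationalizing $p$, the matrix $Q(M)$ is reversible on $M$; (iii) every cycle on every subset $M'\subseteq M$ that is sign-consistent with respect to $p(\cdot,M)$ satisfies $\delta_{kl}(M)=0$ for all its pairs $(k,l)$; equivalently, there is no subset $M'\subseteq M$ and cycle on $M'$ such that $\delta_{kl}(M)>0$ for all pairs $(k,l)$ of the cycle, nor one such that $\delta_{kl}(M)<0$ for all its pairs.
   Context: $X$ is a finite set of alternatives; a menu is a nonempty subset of $X$, and $\mathcal N$ denotes the set of all menus. A stochastic choice function is a map $p:X\times\mathcal N\to[0,1]$ with $\sum_{i\in M}p(i,M)=1$ and $p(i,M)=0$ for $i\notin M$; $p(\cdot,M)$ denotes the row vector $(p(i,M))_{i\in M}$. For $M\in\mathcal N$ and $i,j\in M$ let $\delta_{ij}(M)=p(i,M)\,p(j,\{i,j\})-p(i,\{i,j\})\,p(j,M)$. An MSC (Markov stochastic choice model) $\langle Q,\nu\rangle$ consists of, for every menu $M$, a matrix $Q(M)=(q_{ij}(M))_{i,j\in M}$ with nonnegative entries and a probability distribution $\nu_M$ on $M$, such that for all $M\in\mathcal N$ and distinct $i,j\in M$: (A1) $q_{ii}(M)=1-\sum_{k\neq i}q_{ik}(M)>0$; (A2) if $q_{ij}(\{i,j\})=0$ then $q_{ji}(\{i,j\})>0$; (A3) $q_{ij}(\{i,j\})\,q_{ji}(M)=q_{ji}(\{i,j\})\,q_{ij}(M)$. For a right stochastic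 matrix $Q$ on $M$ and a distribution $\nu$ on $M$ define $\rho(\nu,Q)=\lim_{\alpha\to0^+}\sum_{t\ge0}\alpha(1-\alpha)^t\nu Q^t$ (the limit exists and satisfies $\rho(\nu,Q)(I-Q)=0$). $p$ is rationalized by the MSC $\langle Q,\nu\rangle$ if $p(\cdot,M)=\rho(\nu_M,Q(M))$ for every $M\in\mathcal N$. $Q(M)$ is reversible on $M$ (for the model $\langle Q,\nu\rangle$) if, with $\rho=\rho(\nu_M,Q(M))$, the detailed balance equations $q_{ji}(M)\rho_j=\rho_i\,q_{ij}(M)$ hold for all $i,j\in M$. A cycle on a set $M'=\{i_1,\dots,i_n\}$ (elements listed in some order, distinct) is the set of ordered pairs $\{(i_1,i_2),(i_2,i_3),\dots,(i_{n-1},i_n),(i_n,i_1)\}$. A cycle on $M'\subseteq M$ is sign-consistent with respect to $p(\cdot,M)$ if $\operatorname{sgn}\delta_{ij}(M)=\operatorname{sgn}\delta_{kl}(M)$ for all pairs $(i,j),(k,l)$ in the cycle. *)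

theory Defs
  imports Complex_Main
begin

definition menu :: "'a set \<Rightarrow> 'a set \<Rightarrow> bool" where
  "menu X M \<longleftrightarrow> M \<noteq> {} \<and> M \<subseteq> X"

definition stoch_choice :: "'a set \<Rightarrow> ('a \<Rightarrow> 'a set \<Rightarrow> real) \<Rightarrow> bool" where
  "stoch_choice X p \<longleftrightarrow>
     (\<forall>M. menu X M \<longrightarrow>
        (\<forall>i\<in>X. 0 \<le> p i M \<and> p i M \<le> 1) \<and>
        (\<Sum>i\<in>M. p i M) = 1 \<and>
        (\<forall>i\<in>X. i \<notin> M \<longrightarrow> p i M = 0))"

definition delta :: "('a \<Rightarrow> 'a set \<Rightarrow> real) \<Rightarrow> 'a set \<Rightarrow> 'a \<Rightarrow> 'a \<Rightarrow> real" where
  "delta p M i j = p i M * p j {i, j} - p i {i, j} * p j M"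

fun mpow :: "'a set \<Rightarrow> ('a \<Rightarrow> 'a \<Rightarrow> real) \<Rightarrow> nat \<Rightarrow> 'a \<Rightarrow> 'a \<Rightarrow> real" where
  "mpow M Q 0 = (\<lambda>i j. if i = j then 1 else 0)"
| "mpow M Q (Suc t) = (\<lambda>i j. \<Sum>k\<in>M. mpow M Q t i k * Q k j)"

definition vecmat_pow :: "'a set \<Rightarrow> ('a \<Rightarrow> real) \<Rightarrow> ('a \<Rightarrow> 'a \<Rightarrow> real) \<Rightarrow> nat \<Rightarrow> 'a \<Rightarrow> real" where
  "vecmat_pow M \<nu> Q t j = (\<Sum>i\<in>M. \<nu> i * mpow M Q t i j)"

definition rho :: "'a set \<Rightarrow> ('a \<Rightarrow> real) \<Rightarrow> ('a \<Rightarrow> 'a \<Rightarrow> real) \<Rightarrow> 'a \<Rightarrow> real" where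
  "rho M \<nu> Q j =
     Lim (at_right (0::real)) (\<lambda>\<alpha>. \<Sum>t. \<alpha> * (1 - \<alpha>) ^ t * vecmat_pow M \<nu> Q t j)"

text \<open>Markov stochastic choice model <Q, nu>: Q M i j = q_ij(M), nu M i = nu_M(i).\<close>
definition MSC :: "'a set \<Rightarrow> ('a set \<Rightarrow> 'a \<Rightarrow> 'a \<Rightarrow> real) \<Rightarrow> ('a set \<Rightarrow> 'a \<Rightarrow> real) \<Rightarrow> bool" where
  "MSC X Q \<nu> \<longleftrightarrow>
     (\<forall>M. menu X M \<longrightarrow>
        (\<forall>i\<in>M. \<forall>j\<in>M. 0 \<le> Q M i j) \<and>
        (\<forall>i\<in>M. 0 \<le> \<nu> M i) \<and> (\<Sum>i\<in>M. \<nu> M i) = 1 \<and>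
        (\<forall>i\<in>M. Q M i i = 1 - (\<Sum>k\<in>M - {i}. Q M i k) \<and> Q M i i > 0) \<and>
        (\<forall>i\<in>M. \<forall>j\<in>M. i \<noteq> j \<longrightarrow>
           (Q {i, j} i j = 0 \<longrightarrow> Q {i, j} j i > 0) \<and>
           Q {i, j} i j * Q M j i = Q {i, j} j i * Q M i j))"

definition rationalizes ::
  "'a set \<Rightarrow> ('a \<Rightarrow> 'a set \<Rightarrow> real) \<Rightarrow> ('a set \<Rightarrow> 'a \<Rightarrow> 'a \<Rightarrow> real) \<Rightarrow> ('a set \<Rightarrow> 'a \<Rightarrow> real) \<Rightarrow> bool" where
  "rationalizes X p Q \<nu> \<longleftrightarrow>
     (\<forall>M. menu X M \<longrightarrow> (\<forall>j\<in>M. p j M = rho M (\<nu> M) (Q M) j))"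

definition reversible ::
  "'a set \<Rightarrow> ('a set \<Rightarrow> 'a \<Rightarrow> 'a \<Rightarrow> real) \<Rightarrow> ('a set \<Rightarrow> 'a \<Rightarrow> real) \<Rightarrow> bool" where
  "reversible M Q \<nu> \<longleftrightarrow>
     (\<forall>i\<in>M. \<forall>j\<in>M. Q M j i * rho M (\<nu> M) (Q M) j = rho M (\<nu> M) (Q M) i * Q M i j)"

text \<open>A cycle on M' = {i_1,...,i_n} is given by a nonempty distinct list [i_1,...,i_n];
  its pairs are (i_1,i_2),...,(i_{n-1},i_n),(i_n,i_1).\<close>
definition cycle_pairs :: "'a list \<Rightarrow> ('a \<times> 'a) set" where
  "cycle_pairs xs = set (zip xs (tl xs @ [hd xs]))"

definition sign_consistent :: "('a \<Rightarrow> 'a set \<Rightarrow> real) \<Rightarrow> 'a set \<Rightarrow> 'a list \<Rightarrow> bool" where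
  "sign_consistent p M xs \<longleftrightarrow>
     (\<forall>(i, j)\<in>cycle_pairs xs. \<forall>(k, l)\<in>cycle_pairs xs.
        sgn (delta p M i j) = sgn (delta p M k l))"

end

theory Submission
  imports Defs
begin

(*
  For a rationalizing model, rho = p(., M) is stationary for Q(M), so the net flow
  f_ij = p(i,M) q_ij(M) - p(j,M) q_ji(M) is a circulation on M.  Stationarity on the binary
  menu {i,j} together with (A2) and (A3) makes f_ij a nonnegative multiple of delta_ij(M).
  A nonzero circulation carries a cycle of positive flow, i.e. a cycle on which delta > 0;
  so if no such cycle exists, f vanishes and Q(M) satisfies detailed balance.

  Conversely, on a sign-consistent cycle with delta <> 0 the symmetrised weights 1/|delta_kl|
  balance delta at every vertex.  The chain with jump rates w_N(i,j) p(j,{i,j}), where w is 1/2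
  on binary menus plus a small multiple of these weights on M, satisfies (A1)-(A3), has
  p(., N) as stationary distribution, and fails detailed balance on the cycle.

  That rho is well defined rests on the Abel means a sum_t (1-a)^t Q^t converging as a -> 0:
  they are bounded, and any two cluster points P, P' are Q-invariant on both sides, whence
  P = P P' = P'.
*)

section \<open>Abel means of a stochastic matrix\<close>

lemma bounded_family_convergent_subseq:
  fixes x :: "nat \<Rightarrow> 'i \<Rightarrow> real"
  assumes "finite I" and "\<And>n i. i \<in> I \<Longrightarrow> \<bar>x n i\<bar> \<le> B"
  shows "\<exists>r L. strict_mono r \<and> (\<forall>i\<in>I. (\<lambda>n. x (r n) i) \<longlonglongrightarrow> L i)"
  using assms
proof (induction I rule: finite_induct)
  case empty
  show ?case using strict_mono_id by blast
next
  case (insert i I)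
  then obtain r L where r: "strict_mono r" "\<forall>j\<in>I. (\<lambda>n. x (r n) j) \<longlonglongrightarrow> L j"
    by auto
  obtain f where f: "strict_mono f" "monoseq (\<lambda>n. x (r (f n)) i)"
    using seq_monosub[of "\<lambda>n. x (r n) i"] by blast
  have "Bseq (\<lambda>n. x (r (f n)) i)"
    by (rule BseqI'[where K = B]) (use insert.prems in auto)
  then obtain l where l: "(\<lambda>n. x (r (f n)) i) \<longlonglongrightarrow> l"
    using f(2) Bseq_monoseq_convergent convergent_def by blast
  have "(\<lambda>n. x ((r \<circ> f) n) j) \<longlonglongrightarrow> (L(i := l)) j" if "j \<in> insert i I" for j
  proof (cases "j = i")
    case False
    with that r(2) have "((\<lambda>n. x (r n) j) \<circ> f) \<longlonglongrightarrow> L j"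
      using f(1) LIMSEQ_subseq_LIMSEQ by auto
    then show ?thesis using False by (simp add: comp_def)
  qed (use l in simp)
  then show ?case using strict_mono_o[OF r(1) f(1)] by blast
qed

definition abel_weight :: "real \<Rightarrow> nat \<Rightarrow> real" where
  "abel_weight a t = a * (1 - a) ^ t"

lemma abel_weight_sums: "0 < a \<Longrightarrow> a < 1 \<Longrightarrow> abel_weight a sums 1"
  using sums_mult[OF geometric_sums[of "1 - a"], of a]
  by (simp add: abel_weight_def[abs_def])

lemma abel_weight_nonneg: "0 \<le> a \<Longrightarrow> a \<le> 1 \<Longrightarrow> 0 \<le> abel_weight a t"
  by (simp add: abel_weight_def)

lemma summable_abel_weight_mult:
  assumes "0 < a" "a < 1" and "\<And>t. \<bar>f t\<bar> \<le> B"
  shows "summable (\<lambda>t. abel_weight a t * f t)"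
proof (rule summable_comparison_test'[where g = "\<lambda>t. abel_weight a t * B" and N = 0])
  show "summable (\<lambda>t. abel_weight a t * B)"
    using abel_weight_sums[OF assms(1,2)] summable_mult2 sums_summable by blast
  show "norm (abel_weight a t * f t) \<le> abel_weight a t * B" for t
    using assms abel_weight_nonneg[of a t] by (simp add: abs_mult mult_left_mono)
qed

lemma suminf_abel_weight_const: "0 < a \<Longrightarrow> a < 1 \<Longrightarrow> (\<Sum>t. abel_weight a t * c) = c"
  using sums_unique[OF sums_mult2[OF abel_weight_sums, of a c]] by simp

lemma suminf_abel_weight_Suc:
  assumes "0 < a" "a < 1" and "\<And>t. \<bar>f t\<bar> \<le> B"
  shows "(\<Sum>t. abel_weight a t * f t) = a * f 0 + (1 - a) * (\<Sum>t. abel_weight a t * f (Suc t))"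
proof -
  have "summable (\<lambda>t. abel_weight a t * f t)"
    by (rule summable_abel_weight_mult[OF assms(1,2)]) (rule assms(3))
  then have "(\<Sum>t. abel_weight a t * f t) = abel_weight a 0 * f 0 + (\<Sum>t. abel_weight a (Suc t) * f (Suc t))"
    using suminf_split_head by fastforce
  also have "(\<Sum>t. abel_weight a (Suc t) * f (Suc t)) = (\<Sum>t. (1 - a) * (abel_weight a t * f (Suc t)))"
    by (simp add: abel_weight_def mult_ac)
  also have "\<dots> = (1 - a) * (\<Sum>t. abel_weight a t * f (Suc t))"
    by (rule suminf_mult, rule summable_abel_weight_mult) (use assms in auto)
  finally show ?thesis by (simp add: abel_weight_def)
qed

lemma suminf_abel_weight_sum:
  assumes "0 < a" "a < 1" and "\<And>k t. k \<in> I \<Longrightarrow> \<bar>f t k\<bar> \<le> B"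
  shows "(\<Sum>t. abel_weight a t * (\<Sum>k\<in>I. c k * f t k)) = (\<Sum>k\<in>I. c k * (\<Sum>t. abel_weight a t * f t k))"
proof -
  have summable: "summable (\<lambda>t. abel_weight a t * f t k)" if "k \<in> I" for k
    by (rule summable_abel_weight_mult[OF assms(1,2) assms(3)[OF that]])
  have "(\<Sum>t. abel_weight a t * (\<Sum>k\<in>I. c k * f t k)) = (\<Sum>t. \<Sum>k\<in>I. c k * (abel_weight a t * f t k))"
    by (simp add: sum_distrib_left mult_ac)
  also have "\<dots> = (\<Sum>k\<in>I. \<Sum>t. c k * (abel_weight a t * f t k))"
    by (rule suminf_sum) (use summable summable_mult in blast)
  also have "\<dots> = (\<Sum>k\<in>I. c k * (\<Sum>t. abel_weight a t * f t k))"
    by (intro sum.cong refl suminf_mult summable)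
  finally show ?thesis .
qed

locale stochastic_matrix =
  fixes M :: "'a set" and Q :: "'a \<Rightarrow> 'a \<Rightarrow> real"
  assumes finite_M: "finite M"
    and nonneg: "\<And>i j. i \<in> M \<Longrightarrow> j \<in> M \<Longrightarrow> 0 \<le> Q i j"
    and row_sum: "\<And>i. i \<in> M \<Longrightarrow> (\<Sum>j\<in>M. Q i j) = 1"
begin

lemma mpow_nonneg_row_sum:
  assumes "i \<in> M"
  shows "(\<forall>j\<in>M. 0 \<le> mpow M Q t i j) \<and> (\<Sum>j\<in>M. mpow M Q t i j) = 1"
proof (induction t)
  case 0
  show ?case using assms finite_M by simp
next
  case (Suc t)
  have "(\<Sum>j\<in>M. mpow M Q (Suc t) i j) = (\<Sum>k\<in>M. mpow M Q t i k * (\<Sum>j\<in>M. Q k j))"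
    by (simp only: mpow.simps sum_distrib_left) (rule sum.swap)
  also have "\<dots> = 1" using Suc by (simp add: row_sum)
  finally show ?case
    using Suc by (auto intro!: sum_nonneg mult_nonneg_nonneg nonneg)
qed

lemma abs_mpow_le_1:
  assumes "i \<in> M" "j \<in> M"
  shows "\<bar>mpow M Q t i j\<bar> \<le> 1"
proof -
  have "mpow M Q t i j \<le> (\<Sum>k\<in>M. mpow M Q t i k)"
    using assms finite_M mpow_nonneg_row_sum by (intro member_le_sum) auto
  then show ?thesis using mpow_nonneg_row_sum[OF assms(1)] assms(2) by auto
qed

lemma mpow_Suc_left:
  "i \<in> M \<Longrightarrow> j \<in> M \<Longrightarrow> mpow M Q (Suc t) i j = (\<Sum>k\<in>M. Q i k * mpow M Q t k j)"
proof (induction t arbitrary: i j)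
  case 0
  then show ?case using finite_M by (simp add: if_distrib if_distribR cong: if_cong)
next
  case (Suc t)
  have "mpow M Q (Suc (Suc t)) i j = (\<Sum>k\<in>M. (\<Sum>l\<in>M. Q i l * mpow M Q t l k) * Q k j)"
    using Suc by (simp del: mpow.simps(2) add: mpow.simps(2)[of M Q "Suc t"])
  also have "\<dots> = (\<Sum>l\<in>M. Q i l * (\<Sum>k\<in>M. mpow M Q t l k * Q k j))"
    by (simp add: sum_distrib_left sum_distrib_right mult.assoc) (rule sum.swap)
  finally show ?case by simp
qed

lemma mpow_left_invariant:
  assumes "\<And>i j. i \<in> M \<Longrightarrow> j \<in> M \<Longrightarrow> (\<Sum>k\<in>M. Q i k * X k j) = X i j"
    and "i \<in> M" "j \<in> M"
  shows "(\<Sum>k\<in>M. mpow M Q t i k * X k j) = X i j"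
  using assms(2,3)
proof (induction t arbitrary: i)
  case 0
  then show ?case using finite_M by (simp add: if_distrib[of "\<lambda>u. u * _"] cong: if_cong)
next
  case (Suc t)
  have "(\<Sum>k\<in>M. mpow M Q (Suc t) i k * X k j) = (\<Sum>l\<in>M. mpow M Q t i l * (\<Sum>k\<in>M. Q l k * X k j))"
    by (simp add: sum_distrib_left sum_distrib_right mult.assoc) (rule sum.swap)
  also have "\<dots> = X i j" using Suc assms(1) by simp
  finally show ?case .
qed

lemma mpow_right_invariant:
  assumes "\<And>i j. i \<in> M \<Longrightarrow> j \<in> M \<Longrightarrow> (\<Sum>k\<in>M. X i k * Q k j) = X i j"
    and "i \<in> M" "j \<in> M"
  shows "(\<Sum>k\<in>M. X i k * mpow M Q t k j) = X i j"
  using assms(2,3)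
proof (induction t arbitrary: j)
  case 0
  then show ?case using finite_M by (simp add: if_distrib cong: if_cong)
next
  case (Suc t)
  have "(\<Sum>k\<in>M. X i k * mpow M Q (Suc t) k j) = (\<Sum>l\<in>M. (\<Sum>k\<in>M. X i k * Q k l) * mpow M Q t l j)"
    using Suc.prems mpow_Suc_left
    by (simp add: sum_distrib_left sum_distrib_right mult.assoc) (rule sum.swap)
  also have "\<dots> = X i j" using Suc assms(1) by simp
  finally show ?case .
qed

definition abel_mean :: "real \<Rightarrow> 'a \<Rightarrow> 'a \<Rightarrow> real" where
  "abel_mean a i j = (\<Sum>t. abel_weight a t * mpow M Q t i j)"

lemma abs_abel_mean_le_1:
  assumes "0 < a" "a < 1" "i \<in> M" "j \<in> M"
  shows "\<bar>abel_mean a i j\<bar> \<le> 1"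
proof -
  have summable: "summable (\<lambda>t. abel_weight a t * mpow M Q t i j)"
    by (rule summable_abel_weight_mult[OF assms(1,2) abs_mpow_le_1[OF assms(3,4)]])
  have "0 \<le> abel_mean a i j" unfolding abel_mean_def
    using assms mpow_nonneg_row_sum abel_weight_nonneg
    by (intro suminf_nonneg[OF summable] mult_nonneg_nonneg) auto
  moreover have "abel_mean a i j \<le> (\<Sum>t. abel_weight a t * 1)" unfolding abel_mean_def
    using assms abel_weight_sums abs_mpow_le_1 abel_weight_nonneg
    by (intro suminf_le[OF _ summable] mult_left_mono) (auto dest: sums_summable simp: abs_le_iff)
  ultimately show ?thesis using suminf_abel_weight_const[OF assms(1,2), of 1] by simp
qed

lemma abel_mean_right_shift:
  assumes "0 < a" "a < 1" "i \<in> M" "j \<in> M"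
  shows "abel_mean a i j = a * mpow M Q 0 i j + (1 - a) * (\<Sum>k\<in>M. abel_mean a i k * Q k j)"
proof -
  have "abel_mean a i j = a * mpow M Q 0 i j + (1 - a) * (\<Sum>t. abel_weight a t * (\<Sum>k\<in>M. Q k j * mpow M Q t i k))"
    unfolding abel_mean_def
    by (subst suminf_abel_weight_Suc[OF assms(1,2) abs_mpow_le_1[OF assms(3,4)]]) (simp add: mult.commute)
  also have "(\<Sum>t. abel_weight a t * (\<Sum>k\<in>M. Q k j * mpow M Q t i k)) = (\<Sum>k\<in>M. Q k j * abel_mean a i k)"
    unfolding abel_mean_def by (rule suminf_abel_weight_sum[OF assms(1,2) abs_mpow_le_1[OF assms(3)]])
  finally show ?thesis by (simp add: mult.commute)
qed

lemma abel_mean_left_shift: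
  assumes "0 < a" "a < 1" "i \<in> M" "j \<in> M"
  shows "abel_mean a i j = a * mpow M Q 0 i j + (1 - a) * (\<Sum>k\<in>M. Q i k * abel_mean a k j)"
proof -
  have "abel_mean a i j = a * mpow M Q 0 i j + (1 - a) * (\<Sum>t. abel_weight a t * (\<Sum>k\<in>M. Q i k * mpow M Q t k j))"
    unfolding abel_mean_def
    by (subst suminf_abel_weight_Suc[OF assms(1,2) abs_mpow_le_1[OF assms(3,4)]]) (simp del: mpow.simps(2) add: mpow_Suc_left assms)
  also have "(\<Sum>t. abel_weight a t * (\<Sum>k\<in>M. Q i k * mpow M Q t k j)) = (\<Sum>k\<in>M. Q i k * abel_mean a k j)"
    unfolding abel_mean_def by (rule suminf_abel_weight_sum[OF assms(1,2) abs_mpow_le_1[OF _ assms(4)]])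
  finally show ?thesis .
qed

lemma abel_mean_left_invariant:
  assumes "0 < a" "a < 1" "i \<in> M" "j \<in> M"
    and "\<And>i j. i \<in> M \<Longrightarrow> j \<in> M \<Longrightarrow> (\<Sum>k\<in>M. Q i k * X k j) = X i j"
  shows "(\<Sum>k\<in>M. abel_mean a i k * X k j) = X i j"
proof -
  have "(\<Sum>k\<in>M. abel_mean a i k * X k j) = (\<Sum>t. abel_weight a t * (\<Sum>k\<in>M. X k j * mpow M Q t i k))"
    unfolding abel_mean_def
    by (subst suminf_abel_weight_sum[OF assms(1,2) abs_mpow_le_1[OF assms(3)]]) (simp_all add: mult.commute)
  also have "\<dots> = (\<Sum>t. abel_weight a t * X i j)"
    using mpow_left_invariant[of X, OF assms(5) assms(3,4)] by (simp add: mult.commute)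
  also have "\<dots> = X i j"
    by (rule suminf_abel_weight_const[OF assms(1,2)])
  finally show ?thesis .
qed

lemma abel_mean_right_invariant:
  assumes "0 < a" "a < 1" "i \<in> M" "j \<in> M"
    and "\<And>i j. i \<in> M \<Longrightarrow> j \<in> M \<Longrightarrow> (\<Sum>k\<in>M. X i k * Q k j) = X i j"
  shows "(\<Sum>k\<in>M. X i k * abel_mean a k j) = X i j"
proof -
  have "(\<Sum>k\<in>M. X i k * abel_mean a k j) = (\<Sum>t. abel_weight a t * (\<Sum>k\<in>M. X i k * mpow M Q t k j))"
    unfolding abel_mean_def
    by (subst suminf_abel_weight_sum[OF assms(1,2) abs_mpow_le_1[OF _ assms(4)]]) simp_all
  also have "\<dots> = X i j"
    using mpow_right_invariant[of X, OF assms(5) assms(3,4)] suminf_abel_weight_const[OF assms(1,2)]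
    by simp
  finally show ?thesis .
qed

text \<open>P is the limit of the Abel means as the parameter a tends to 0 along the filter F: cluster
  points arise with F = sequentially, the limit itself with F = at_right 0 and a the identity.\<close>

definition abel_limit_along :: "'b filter \<Rightarrow> ('b \<Rightarrow> real) \<Rightarrow> ('a \<Rightarrow> 'a \<Rightarrow> real) \<Rightarrow> bool" where
  "abel_limit_along F a P \<longleftrightarrow> F \<noteq> bot \<and> (a \<longlongrightarrow> 0) F \<and> eventually (\<lambda>x. 0 < a x \<and> a x < 1) F \<and>
     (\<forall>i\<in>M. \<forall>j\<in>M. ((\<lambda>x. abel_mean (a x) i j) \<longlongrightarrow> P i j) F)"

lemma abel_limit_along_invariant:
  assumes lim: "abel_limit_along F a P" and ij: "i \<in> M" "j \<in> M"
  shows "(\<Sum>k\<in>M. P i k * Q k j) = P i j" and "(\<Sum>k\<in>M. Q i k * P k j) = P i j"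
proof -
  have F: "F \<noteq> bot" "(a \<longlongrightarrow> 0) F" "eventually (\<lambda>x. 0 < a x \<and> a x < 1) F"
    and P: "\<And>i j. i \<in> M \<Longrightarrow> j \<in> M \<Longrightarrow> ((\<lambda>x. abel_mean (a x) i j) \<longlongrightarrow> P i j) F"
    using lim unfolding abel_limit_along_def by auto
  have "((\<lambda>x. a x * mpow M Q 0 i j + (1 - a x) * (\<Sum>k\<in>M. abel_mean (a x) i k * Q k j))
      \<longlongrightarrow> 0 * mpow M Q 0 i j + (1 - 0) * (\<Sum>k\<in>M. P i k * Q k j)) F"
    using ij by (intro tendsto_intros F(2) P)
  moreover have "eventually (\<lambda>x. abel_mean (a x) i j
      = a x * mpow M Q 0 i j + (1 - a x) * (\<Sum>k\<in>M. abel_mean (a x) i k * Q k j)) F"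
    using F(3) by eventually_elim (use abel_mean_right_shift ij in blast)
  ultimately have "((\<lambda>x. abel_mean (a x) i j) \<longlongrightarrow> (\<Sum>k\<in>M. P i k * Q k j)) F"
    by (simp add: tendsto_cong)
  then show "(\<Sum>k\<in>M. P i k * Q k j) = P i j"
    using tendsto_unique[OF F(1) P[OF ij]] by simp
  have "((\<lambda>x. a x * mpow M Q 0 i j + (1 - a x) * (\<Sum>k\<in>M. Q i k * abel_mean (a x) k j))
      \<longlongrightarrow> 0 * mpow M Q 0 i j + (1 - 0) * (\<Sum>k\<in>M. Q i k * P k j)) F"
    using ij by (intro tendsto_intros F(2) P)
  moreover have "eventually (\<lambda>x. abel_mean (a x) i j
      = a x * mpow M Q 0 i j + (1 - a x) * (\<Sum>k\<in>M. Q i k * abel_mean (a x) k j)) F"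
    using F(3) by eventually_elim (use abel_mean_left_shift ij in blast)
  ultimately have "((\<lambda>x. abel_mean (a x) i j) \<longlongrightarrow> (\<Sum>k\<in>M. Q i k * P k j)) F"
    by (simp add: tendsto_cong)
  then show "(\<Sum>k\<in>M. Q i k * P k j) = P i j"
    using tendsto_unique[OF F(1) P[OF ij]] by simp
qed

lemma abel_limit_along_unique:
  assumes lim: "abel_limit_along F a P" and lim': "abel_limit_along G b P'" and ij: "i \<in> M" "j \<in> M"
  shows "P i j = P' i j"
proof -
  have F: "F \<noteq> bot" "eventually (\<lambda>x. 0 < a x \<and> a x < 1) F"
    and P: "\<And>i j. i \<in> M \<Longrightarrow> j \<in> M \<Longrightarrow> ((\<lambda>x. abel_mean (a x) i j) \<longlongrightarrow> P i j) F"
    using lim unfolding abel_limit_along_def by auto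
  have G: "G \<noteq> bot" "eventually (\<lambda>y. 0 < b y \<and> b y < 1) G"
    and P': "\<And>i j. i \<in> M \<Longrightarrow> j \<in> M \<Longrightarrow> ((\<lambda>y. abel_mean (b y) i j) \<longlongrightarrow> P' i j) G"
    using lim' unfolding abel_limit_along_def by auto
  have "((\<lambda>x. \<Sum>k\<in>M. abel_mean (a x) i k * P' k j) \<longlongrightarrow> (\<Sum>k\<in>M. P i k * P' k j)) F"
    using ij by (intro tendsto_intros P)
  moreover have "eventually (\<lambda>x. (\<Sum>k\<in>M. abel_mean (a x) i k * P' k j) = P' i j) F"
    using F(2) by eventually_elim
      (use abel_mean_left_invariant abel_limit_along_invariant(2)[OF lim'] ij in blast)
  ultimately have "((\<lambda>x. P' i j) \<longlongrightarrow> (\<Sum>k\<in>M. P i k * P' k j)) F"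
    by (simp add: tendsto_cong)
  then have P'_eq: "P' i j = (\<Sum>k\<in>M. P i k * P' k j)"
    by (rule tendsto_unique[OF F(1) tendsto_const])
  have "((\<lambda>y. \<Sum>k\<in>M. P i k * abel_mean (b y) k j) \<longlongrightarrow> (\<Sum>k\<in>M. P i k * P' k j)) G"
    using ij by (intro tendsto_intros P')
  moreover have "eventually (\<lambda>y. (\<Sum>k\<in>M. P i k * abel_mean (b y) k j) = P i j) G"
    using G(2) by eventually_elim
      (use abel_mean_right_invariant abel_limit_along_invariant(1)[OF lim] ij in blast)
  ultimately have "((\<lambda>y. P i j) \<longlongrightarrow> (\<Sum>k\<in>M. P i k * P' k j)) G"
    by (simp add: tendsto_cong)
  then have "P i j = (\<Sum>k\<in>M. P i k * P' k j)"
    by (rule tendsto_unique[OF G(1) tendsto_const])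
  with P'_eq show ?thesis by simp
qed

lemma abel_limit_along_subseq:
  assumes a: "\<And>n. 0 < a n" "\<And>n. a n < 1" "a \<longlonglongrightarrow> 0"
  shows "\<exists>r P. strict_mono r \<and> abel_limit_along sequentially (a \<circ> r) P"
proof -
  obtain r L where r: "strict_mono r"
    and L: "\<forall>ij\<in>M \<times> M. (\<lambda>n. abel_mean (a (r n)) (fst ij) (snd ij)) \<longlonglongrightarrow> L ij"
    using bounded_family_convergent_subseq[of "M \<times> M" "\<lambda>n ij. abel_mean (a n) (fst ij) (snd ij)" 1]
      finite_M abs_abel_mean_le_1 a by fastforce
  have "abel_limit_along sequentially (a \<circ> r) (\<lambda>i j. L (i, j))"
    unfolding abel_limit_along_def using a L LIMSEQ_subseq_LIMSEQ[OF a(3) r] by auto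
  then show ?thesis using r by blast
qed

lemma abel_limit_at_right_exists: "\<exists>P. abel_limit_along (at_right 0) (\<lambda>x. x) P"
proof -
  define a0 where "a0 n = inverse (real (Suc (Suc n)))" for n
  have a0: "0 < a0 n" "a0 n < 1" for n unfolding a0_def by (auto simp: inverse_less_1_iff)
  have "a0 \<longlonglongrightarrow> 0"
    unfolding a0_def by (rule LIMSEQ_Suc[OF LIMSEQ_inverse_real_of_nat])
  then obtain r0 P0 where P0: "abel_limit_along sequentially (a0 \<circ> r0) P0"
    using abel_limit_along_subseq a0 by blast
  have "((\<lambda>x. abel_mean x i j) \<longlongrightarrow> P0 i j) (at_right 0)" if ij: "i \<in> M" "j \<in> M" for i j
  proof (rule ccontr)
    assume "\<not> ?thesis"
    then obtain e where "e > 0" and "\<not> eventually (\<lambda>x. dist (abel_mean x i j) (P0 i j) < e) (at_right 0)"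
      unfolding tendsto_iff by blast
    then have "\<forall>n. \<exists>x>0. x < a0 n \<and> \<not> dist (abel_mean x i j) (P0 i j) < e"
      unfolding eventually_at_right_field using a0 by blast
    then obtain a where a: "\<And>n. 0 < a n" "\<And>n. a n < a0 n"
      and far: "\<And>n. \<not> dist (abel_mean (a n) i j) (P0 i j) < e"
      by metis
    have "a \<longlonglongrightarrow> 0"
      by (rule tendsto_sandwich[OF _ _ tendsto_const \<open>a0 \<longlonglongrightarrow> 0\<close>]) (use a in \<open>auto intro!: always_eventually less_imp_le\<close>)
    then obtain r P where P: "abel_limit_along sequentially (a \<circ> r) P"
      using abel_limit_along_subseq[of a] a a0 less_trans by blast
    then have "(\<lambda>n. abel_mean (a (r n)) i j) \<longlonglongrightarrow> P i j"
      using ij unfolding abel_limit_along_def by auto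
    then have "(\<lambda>n. abel_mean (a (r n)) i j) \<longlonglongrightarrow> P0 i j"
      using abel_limit_along_unique[OF P P0 ij] by simp
    then obtain n where "norm (abel_mean (a (r n)) i j - P0 i j) < e"
      using LIMSEQ_D[OF _ \<open>e > 0\<close>] by blast
    then show False using far[of "r n"] by (simp add: dist_real_def)
  qed
  moreover have "eventually (\<lambda>x. 0 < x \<and> x < (1::real)) (at_right 0)"
    unfolding eventually_at_right_field by (intro exI[of _ 1]) auto
  ultimately have "abel_limit_along (at_right 0) (\<lambda>x. x) P0"
    unfolding abel_limit_along_def by (auto intro: tendsto_ident_at)
  then show ?thesis by blast
qed

lemma rho_eq_abel_limit:
  assumes lim: "abel_limit_along (at_right 0) (\<lambda>x. x) P" and j: "j \<in> M"
  shows "rho M \<nu> Q j = (\<Sum>l\<in>M. \<nu> l * P l j)"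
proof -
  have "eventually (\<lambda>a. (\<Sum>t. a * (1 - a) ^ t * vecmat_pow M \<nu> Q t j) = (\<Sum>l\<in>M. \<nu> l * abel_mean a l j))
      (at_right 0)"
    unfolding eventually_at_right_field
  proof (intro exI[of _ 1] conjI allI impI)
    fix a :: real assume a: "0 < a" "a < 1"
    have "(\<Sum>t. a * (1 - a) ^ t * vecmat_pow M \<nu> Q t j)
        = (\<Sum>t. abel_weight a t * (\<Sum>l\<in>M. \<nu> l * mpow M Q t l j))"
      by (simp add: abel_weight_def vecmat_pow_def)
    also have "\<dots> = (\<Sum>l\<in>M. \<nu> l * abel_mean a l j)"
      unfolding abel_mean_def using a abs_mpow_le_1 j by (intro suminf_abel_weight_sum) auto
    finally show "(\<Sum>t. a * (1 - a) ^ t * vecmat_pow M \<nu> Q t j) = (\<Sum>l\<in>M. \<nu> l * abel_mean a l j)" .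
  qed simp
  moreover have "((\<lambda>a. \<Sum>l\<in>M. \<nu> l * abel_mean a l j) \<longlongrightarrow> (\<Sum>l\<in>M. \<nu> l * P l j)) (at_right 0)"
    using lim j unfolding abel_limit_along_def by (intro tendsto_intros) auto
  ultimately show ?thesis
    unfolding rho_def by (intro tendsto_Lim) (simp_all add: tendsto_cong)
qed

theorem rho_stationary:
  assumes "j \<in> M"
  shows "(\<Sum>i\<in>M. rho M \<nu> Q i * Q i j) = rho M \<nu> Q j"
proof -
  obtain P where P: "abel_limit_along (at_right 0) (\<lambda>x. x) P"
    using abel_limit_at_right_exists by blast
  have "(\<Sum>i\<in>M. rho M \<nu> Q i * Q i j) = (\<Sum>l\<in>M. \<nu> l * (\<Sum>i\<in>M. P l i * Q i j))"
    using rho_eq_abel_limit[OF P]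
    by (simp add: sum_distrib_left sum_distrib_right mult.assoc) (rule sum.swap)
  also have "\<dots> = rho M \<nu> Q j"
    using abel_limit_along_invariant(1)[OF P] rho_eq_abel_limit[OF P assms] assms by simp
  finally show ?thesis .
qed

end

lemma rho_stationary_initial:
  assumes "finite N" and stationary: "\<And>j. j \<in> N \<Longrightarrow> (\<Sum>i\<in>N. \<nu> i * Q i j) = \<nu> j" and "j \<in> N"
  shows "rho N \<nu> Q j = \<nu> j"
proof -
  have vecmat_pow: "vecmat_pow N \<nu> Q t j = \<nu> j" if "j \<in> N" for t j
    using that
  proof (induction t arbitrary: j)
    case 0
    then show ?case using assms(1) by (simp add: vecmat_pow_def if_distrib cong: if_cong)
  next
    case (Suc t)
    have "vecmat_pow N \<nu> Q (Suc t) j = (\<Sum>k\<in>N. vecmat_pow N \<nu> Q t k * Q k j)"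
      unfolding vecmat_pow_def
      by (simp add: sum_distrib_left sum_distrib_right mult.assoc) (rule sum.swap)
    then show ?case using Suc stationary by simp
  qed
  have "eventually (\<lambda>a. (\<Sum>t. a * (1 - a) ^ t * vecmat_pow N \<nu> Q t j) = \<nu> j) (at_right 0)"
    unfolding eventually_at_right_field
    using vecmat_pow[OF \<open>j \<in> N\<close>] suminf_abel_weight_const
    by (intro exI[of _ 1]) (simp add: abel_weight_def)
  then show ?thesis
    unfolding rho_def by (intro tendsto_Lim) (simp_all add: tendsto_cong)
qed

section \<open>Cycles and circulations\<close>

lemma cycle_pairs_rotate1: "cycle_pairs xs = set (zip xs (rotate1 xs))"
  by (cases xs) (simp_all add: cycle_pairs_def)

lemma cycle_pairs_nonempty: "xs \<noteq> [] \<Longrightarrow> cycle_pairs xs \<noteq> {}"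
  by (cases xs) (auto simp: cycle_pairs_def)

lemma cycle_pairs_subset: "cycle_pairs xs \<subseteq> set xs \<times> set xs"
  unfolding cycle_pairs_rotate1 by (auto dest: set_zip_leftD set_zip_rightD)

lemma cycle_pairs_map_upt:
  assumes "0 < k" "g k = g 0"
  shows "cycle_pairs (map g [0..<k]) = (\<lambda>t. (g t, g (Suc t))) ` {0..<k}"
proof -
  have "tl (map g [0..<k]) @ [hd (map g [0..<k])] = map g ([1..<k] @ [k])"
    using assms by (simp add: upt_conv_Cons map_tl)
  also have "\<dots> = map g (map Suc [0..<k])"
    using assms upt_Suc_append[of 1 k] map_Suc_upt[of 0 k] by simp
  finally have rotated: "tl (map g [0..<k]) @ [hd (map g [0..<k])] = map (g \<circ> Suc) [0..<k]"
    by simp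
  show ?thesis unfolding cycle_pairs_def rotated zip_map_map zip_same_conv_map by auto
qed

lemma self_map_periodic_orbit:
  assumes "finite A" and s: "s ` A \<subseteq> A" and "y0 \<in> A"
  shows "\<exists>y\<in>A. \<exists>k>0. (s ^^ k) y = y \<and> distinct (map (\<lambda>t. (s ^^ t) y) [0..<k])"
proof -
  have iter_in: "(s ^^ n) u \<in> A" if "u \<in> A" for n u using that s by (induction n) auto
  have "\<not> inj_on (\<lambda>n. (s ^^ n) y0) {..card A}"
  proof
    assume "inj_on (\<lambda>n. (s ^^ n) y0) {..card A}"
    moreover have "(\<lambda>n. (s ^^ n) y0) ` {..card A} \<subseteq> A" using iter_in \<open>y0 \<in> A\<close> by auto
    ultimately show False using card_inj_on_le[OF _ _ \<open>finite A\<close>] by fastforce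
  qed
  then obtain i j where "i < j" "(s ^^ i) y0 = (s ^^ j) y0"
    unfolding inj_on_def by (metis linorder_neqE_nat)
  define y where "y = (s ^^ i) y0"
  have "y \<in> A" using iter_in \<open>y0 \<in> A\<close> y_def by simp
  have "(s ^^ (j - i)) y = y"
    using \<open>i < j\<close> \<open>(s ^^ i) y0 = (s ^^ j) y0\<close> unfolding y_def
    by (metis comp_apply funpow_add le_add_diff_inverse2 less_imp_le)
  then have ex: "\<exists>k. 0 < k \<and> (s ^^ k) y = y" using \<open>i < j\<close> by (intro exI[of _ "j - i"]) auto
  define k where "k = (LEAST k. 0 < k \<and> (s ^^ k) y = y)"
  have k: "0 < k" "(s ^^ k) y = y" using LeastI_ex[OF ex] k_def by auto
  have "distinct (map (\<lambda>t. (s ^^ t) y) [0..<k])"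
  proof (rule ccontr)
    assume "\<not> ?thesis"
    then obtain a b where ab: "a < b" "b < k" "(s ^^ a) y = (s ^^ b) y"
      unfolding distinct_conv_nth by (auto, metis linorder_neqE_nat)
    \<comment> \<open>then k - b + a is a smaller period\<close>
    have "(s ^^ (k - b + a)) y = (s ^^ (k - b)) ((s ^^ a) y)" by (metis comp_apply funpow_add)
    also have "\<dots> = (s ^^ (k - b)) ((s ^^ b) y)" using ab by simp
    also have "\<dots> = y" using k ab by (metis comp_apply funpow_add le_add_diff_inverse2 less_imp_le)
    finally have "(s ^^ (k - b + a)) y = y" .
    moreover have "k - b + a < k" using ab by simp
    ultimately show False
      using not_less_Least[of "k - b + a" "\<lambda>k. 0 < k \<and> (s ^^ k) y = y"] ab unfolding k_def by simp
  qed
  then show ?thesis using \<open>y \<in> A\<close> k by blast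
qed

lemma self_map_cycle:
  assumes "finite A" and s: "s ` A \<subseteq> A" and "y0 \<in> A"
  shows "\<exists>xs. xs \<noteq> [] \<and> distinct xs \<and> set xs \<subseteq> A \<and> (\<forall>(u, v)\<in>cycle_pairs xs. v = s u)"
proof -
  from self_map_periodic_orbit[OF assms] obtain y k where "y \<in> A" "0 < k" "(s ^^ k) y = y"
    and distinct: "distinct (map (\<lambda>t. (s ^^ t) y) [0..<k])"
    by (elim bexE exE conjE)
  define xs where "xs = map (\<lambda>t. (s ^^ t) y) [0..<k]"
  have "(s ^^ t) y \<in> A" for t using \<open>y \<in> A\<close> s by (induction t) auto
  then have "set xs \<subseteq> A" unfolding xs_def by auto
  moreover have "cycle_pairs xs = (\<lambda>t. ((s ^^ t) y, (s ^^ Suc t) y)) ` {0..<k}"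
    unfolding xs_def by (rule cycle_pairs_map_upt) (use \<open>0 < k\<close> \<open>(s ^^ k) y = y\<close> in simp_all)
  then have "\<forall>(u, v)\<in>cycle_pairs xs. v = s u" by auto
  moreover have "xs \<noteq> []" "distinct xs" using \<open>0 < k\<close> distinct unfolding xs_def by auto
  ultimately show ?thesis by blast
qed

lemma circulation_positive_cycle:
  fixes f :: "'a \<Rightarrow> 'a \<Rightarrow> real"
  assumes "finite M" and anti: "\<And>u v. f v u = - f u v"
    and circulation: "\<And>u. u \<in> M \<Longrightarrow> (\<Sum>v\<in>M. f u v) = 0"
    and "i \<in> M" "j \<in> M" "f i j \<noteq> 0"
  shows "\<exists>xs. xs \<noteq> [] \<and> distinct xs \<and> set xs \<subseteq> M \<and> (\<forall>(k, l)\<in>cycle_pairs xs. 0 < f k l)"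
proof -
  \<comment> \<open>flow entering a vertex has to leave it again\<close>
  have out: "\<exists>w\<in>M. 0 < f u w" if "u \<in> M" "v \<in> M" "0 < f v u" for u v
  proof (rule ccontr)
    assume "\<not> ?thesis"
    then have "(\<Sum>w\<in>M - {v}. f u w) \<le> 0" using sum_nonpos[of "M - {v}" "f u"] by force
    moreover have "f u v < 0" using that anti[of v u] by simp
    ultimately show False
      using circulation[OF \<open>u \<in> M\<close>] sum.remove[OF \<open>finite M\<close> \<open>v \<in> M\<close>, of "f u"] by simp
  qed
  define A where "A = {u\<in>M. \<exists>v\<in>M. 0 < f u v}"
  define s where "s u = (SOME v. v \<in> M \<and> 0 < f u v)" for u
  have s: "s u \<in> M" "0 < f u (s u)" if "u \<in> A" for u
    using someI_ex[of "\<lambda>v. v \<in> M \<and> 0 < f u v"] that unfolding A_def s_def by auto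
  have "0 < f i j \<or> 0 < f j i" using \<open>f i j \<noteq> 0\<close> anti[of i j] by linarith
  then obtain y0 where "y0 \<in> A" using \<open>i \<in> M\<close> \<open>j \<in> M\<close> unfolding A_def by blast
  moreover have "s ` A \<subseteq> A"
    using s out unfolding A_def by fastforce
  moreover have "finite A" using \<open>finite M\<close> unfolding A_def by simp
  ultimately obtain xs where "xs \<noteq> []" "distinct xs" "set xs \<subseteq> A"
    and cycle: "\<forall>(u, v)\<in>cycle_pairs xs. v = s u"
    using self_map_cycle by metis
  moreover have "0 < f k l" if "(k, l) \<in> cycle_pairs xs" for k l
  proof -
    have "k \<in> A" using that cycle_pairs_subset[of xs] \<open>set xs \<subseteq> A\<close> by blast
    moreover have "l = s k" using that cycle by blast
    ultimately show ?thesis using s by simp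
  qed
  ultimately show ?thesis using \<open>xs \<noteq> []\<close> \<open>distinct xs\<close> \<open>set xs \<subseteq> A\<close> unfolding A_def by blast
qed

lemma card_zip_predecessors:
  assumes "length xs = length ys" "distinct ys"
  shows "card {i. (i, j) \<in> set (zip xs ys)} = (if j \<in> set ys then 1 else 0)"
proof (cases "j \<in> set ys")
  case True
  then obtain n where n: "n < length ys" "ys ! n = j" by (auto simp: in_set_conv_nth)
  have "{i. (i, j) \<in> set (zip xs ys)} = {xs ! n}"
  proof (intro set_eqI iffI)
    fix i assume "i \<in> {i. (i, j) \<in> set (zip xs ys)}"
    then obtain m where m: "m < length ys" "xs ! m = i" "ys ! m = j"
      by (auto simp: in_set_zip)
    then have "m = n" using n assms(2) nth_eq_iff_index_eq by metis
    then show "i \<in> {xs ! n}" using m by simp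
  qed (use n assms(1) in \<open>auto simp: in_set_zip\<close>)
  then show ?thesis using True by simp
next
  case False
  then have "{i. (i, j) \<in> set (zip xs ys)} = {}" by (auto dest: set_zip_rightD)
  then show ?thesis using False by simp
qed

lemma card_cycle_predecessors_eq_successors:
  assumes "distinct xs"
  shows "card {i. (i, j) \<in> cycle_pairs xs} = card {i. (j, i) \<in> cycle_pairs xs}"
proof -
  have "{i. (j, i) \<in> cycle_pairs xs} = {i. (i, j) \<in> set (zip (rotate1 xs) xs)}"
    unfolding cycle_pairs_rotate1 by (subst zip_commute) auto
  then show ?thesis
    using card_zip_predecessors[of xs "rotate1 xs" j] card_zip_predecessors[of "rotate1 xs" xs j] assms
    unfolding cycle_pairs_rotate1 by simp
qed

lemma cycle_balancing_weights:
  fixes d :: "'a \<Rightarrow> 'a \<Rightarrow> real"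
  assumes "finite M" "distinct xs" "set xs \<subseteq> M"
    and anti: "\<And>i j. d j i = - d i j"
    and sign: "\<And>k l. (k, l) \<in> cycle_pairs xs \<Longrightarrow> sgn (d k l) = \<sigma>" and "\<sigma> \<noteq> 0"
  shows "\<exists>g. (\<forall>i j. g j i = g i j) \<and> (\<forall>i j. 0 \<le> g i j) \<and>
    (\<forall>j\<in>M. (\<Sum>i\<in>M. g i j * d i j) = 0) \<and> (\<forall>(k, l)\<in>cycle_pairs xs. 0 < g k l)"
proof -
  \<comment> \<open>weight 1/|d| on every edge of the cycle: each vertex of the cycle gets \<sigma> from its
    predecessor and gives \<sigma> to its successor\<close>
  define C where "C = cycle_pairs xs"
  define h where "h i j = (if (i, j) \<in> C then 1 / \<bar>d i j\<bar> else 0)" for i j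
  define g where "g i j = h i j + h j i" for i j
  have C_M: "C \<subseteq> M \<times> M" using cycle_pairs_subset[of xs] assms(3) unfolding C_def by blast
  have h_d: "h i j * d i j = (if (i, j) \<in> C then \<sigma> else 0)" for i j
    using sign[of i j] \<open>\<sigma> \<noteq> 0\<close> unfolding h_def C_def by (auto simp: sgn_real_def split: if_splits)
  have count: "(\<Sum>i\<in>M. if P i then \<sigma> else 0) = \<sigma> * card {i. P i}" if "{i. P i} \<subseteq> M" for P
  proof -
    have "{i\<in>M. P i} = {i. P i}" using that by blast
    then show ?thesis using sum.inter_filter[OF \<open>finite M\<close>, of "\<lambda>_. \<sigma>" P] by (simp add: mult.commute)
  qed
  have "(\<Sum>i\<in>M. g i j * d i j) = 0" for j
  proof -
    have "g i j * d i j = h i j * d i j - h j i * d j i" for i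
      unfolding g_def using anti[of i j] by (simp add: algebra_simps)
    then have "(\<Sum>i\<in>M. g i j * d i j) = (\<Sum>i\<in>M. h i j * d i j) - (\<Sum>i\<in>M. h j i * d j i)"
      by (simp add: sum_subtractf)
    also have "\<dots> = \<sigma> * card {i. (i, j) \<in> C} - \<sigma> * card {i. (j, i) \<in> C}"
      unfolding h_d using C_M by (subst (1 2) count) auto
    also have "\<dots> = 0"
      using card_cycle_predecessors_eq_successors[OF assms(2), of j] unfolding C_def by simp
    finally show ?thesis .
  qed
  moreover have "0 < g k l" if "(k, l) \<in> C" for k l
    using that sign[of k l] \<open>\<sigma> \<noteq> 0\<close> unfolding g_def h_def C_def
    by (auto intro!: add_pos_nonneg)
  moreover have "g j i = g i j" "0 \<le> g i j" for i j unfolding g_def h_def by auto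
  ultimately show ?thesis unfolding C_def by blast
qed

section \<open>Markov stochastic choice models\<close>

lemma menu_finite: "finite X \<Longrightarrow> menu X N \<Longrightarrow> finite N"
  unfolding menu_def using finite_subset by blast

lemma stochastic_matrix_MSC:
  assumes "MSC X Q \<nu>" "finite X" "menu X N"
  shows "stochastic_matrix N (Q N)"
proof
  show "finite N" using menu_finite assms(2,3) .
  show "0 \<le> Q N i j" if "i \<in> N" "j \<in> N" for i j
    using assms(1,3) that unfolding MSC_def by blast
  show "(\<Sum>j\<in>N. Q N i j) = 1" if "i \<in> N" for i
    using assms(1,3) that sum.remove[OF \<open>finite N\<close> that, of "Q N i"] unfolding MSC_def by auto
qed

lemma rationalized_stationary:
  assumes "MSC X Q \<nu>" "rationalizes X p Q \<nu>" "finite X" "menu X N" "j \<in> N"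
  shows "(\<Sum>i\<in>N. p i N * Q N i j) = p j N"
proof -
  have "p i N = rho N (\<nu> N) (Q N) i" if "i \<in> N" for i
    using assms(2,4) that unfolding rationalizes_def by blast
  with stochastic_matrix.rho_stationary[OF stochastic_matrix_MSC[OF assms(1,3,4)] assms(5)]
  show ?thesis using assms(5) by simp
qed

lemma reversible_iff_detailed_balance:
  assumes "rationalizes X p Q \<nu>" "menu X M"
  shows "reversible M Q \<nu> \<longleftrightarrow> (\<forall>i\<in>M. \<forall>j\<in>M. p i M * Q M i j = p j M * Q M j i)"
  using assms unfolding reversible_def rationalizes_def by (auto simp: mult.commute)

lemma stoch_choice_bounds:
  "stoch_choice X p \<Longrightarrow> menu X N \<Longrightarrow> i \<in> X \<Longrightarrow> 0 \<le> p i N \<and> p i N \<le> 1"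
  unfolding stoch_choice_def by blast

lemma stoch_choice_pair:
  assumes "stoch_choice X p" "i \<in> X" "j \<in> X" "i \<noteq> j"
  shows "p i {i, j} + p j {i, j} = 1" "0 \<le> p i {i, j}" "0 \<le> p j {i, j}"
proof -
  have "menu X {i, j}" using assms(2,3) unfolding menu_def by auto
  then show "p i {i, j} + p j {i, j} = 1" "0 \<le> p i {i, j}" "0 \<le> p j {i, j}"
    using assms unfolding stoch_choice_def by auto
qed

lemma delta_swap: "delta p M j i = - delta p M i j"
  unfolding delta_def by (simp add: insert_commute)

lemma delta_pair: "delta p {i, j} i j = 0"
  unfolding delta_def by simp

lemma rationalized_pair_balance:
  assumes MSC: "MSC X Q \<nu>" and rat: "rationalizes X p Q \<nu>" and "finite X" and pair: "menu X {i, j}"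
  shows "p i {i, j} * Q {i, j} i j = p j {i, j} * Q {i, j} j i"
proof (cases "i = j")
  case False
  have "p i {i, j} * Q {i, j} i j + p j {i, j} * Q {i, j} j j = p j {i, j}"
    using rationalized_stationary[OF MSC rat \<open>finite X\<close> pair, of j] False by simp
  moreover have "Q {i, j} j j = 1 - Q {i, j} j i"
    using stochastic_matrix.row_sum[OF stochastic_matrix_MSC[OF MSC \<open>finite X\<close> pair], of j] False by simp
  ultimately show ?thesis by (simp add: right_diff_distrib)
qed simp

lemma net_flow_nonneg_multiple_of_delta:
  assumes MSC: "MSC X Q \<nu>" and rat: "rationalizes X p Q \<nu>" and "finite X"
    and sc: "stoch_choice X p" and M: "menu X M" and ij: "i \<in> M" "j \<in> M" "i \<noteq> j"
  shows "\<exists>c\<ge>0. p i M * Q M i j - p j M * Q M j i = c * delta p M i j"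
proof -
  have MX: "M \<subseteq> X" using M unfolding menu_def by auto
  have pair: "menu X {i, j}" using ij MX unfolding menu_def by auto
  define a where "a = Q {i, j} i j"
  define b where "b = Q {i, j} j i"
  define x where "x = p i {i, j}"
  define y where "y = p j {i, j}"
  have A2: "a = 0 \<longrightarrow> b > 0" and A3: "a * Q M j i = b * Q M i j"
    using MSC M ij unfolding MSC_def a_def b_def by blast+
  have nonneg: "0 \<le> a" "0 \<le> b" "0 \<le> Q M i j" "0 \<le> Q M j i"
    using MSC M pair ij unfolding MSC_def a_def b_def by auto
  have xy: "x + y = 1" "0 \<le> x"
    unfolding x_def y_def using stoch_choice_pair[OF sc, of i j] ij MX by auto
  have pair_balance: "x * a = y * b"
    unfolding x_def y_def a_def b_def by (rule rationalized_pair_balance[OF MSC rat \<open>finite X\<close> pair])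
  have delta_xy: "delta p M i j = p i M * y - x * p j M"
    unfolding delta_def x_def y_def by simp
  show ?thesis
  proof (cases "b > 0")
    case True
    \<comment> \<open>the pair balance and (A3) give x q_ij(M) = y q_ji(M), hence x times the flow is q_ji(M) delta\<close>
    with pair_balance xy have "x > 0" by (cases "x = 0") auto
    have "b * (x * Q M i j) = b * (y * Q M j i)"
      using A3 pair_balance by (metis mult.assoc mult.commute)
    then have "x * Q M i j = y * Q M j i" using True by simp
    then have "p i M * Q M i j - p j M * Q M j i = (Q M j i / x) * delta p M i j"
      using \<open>x > 0\<close> unfolding delta_xy by (simp add: field_simps)
    then show ?thesis using \<open>x > 0\<close> nonneg by (intro exI[of _ "Q M j i / x"]) simp
  next
    case False
    with A2 nonneg have "b = 0" "a > 0" by auto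
    with A3 pair_balance xy have "Q M j i = 0" "x = 0" "y = 1" by auto
    then show ?thesis using nonneg unfolding delta_xy by (intro exI[of _ "Q M i j"]) simp
  qed
qed

theorem reversible_if_no_sign_consistent_cycle:
  assumes "finite X" "stoch_choice X p" "menu X M" and MSC: "MSC X Q \<nu>" and rat: "rationalizes X p Q \<nu>"
    and no_cycle: "\<forall>xs. xs \<noteq> [] \<and> distinct xs \<and> set xs \<subseteq> M \<and> sign_consistent p M xs \<longrightarrow>
        (\<forall>(k, l)\<in>cycle_pairs xs. delta p M k l = 0)"
  shows "reversible M Q \<nu>"
proof -
  define f where "f i j = p i M * Q M i j - p j M * Q M j i" for i j
  have finite_M: "finite M" using menu_finite assms(1,3) .
  have anti: "f v u = - f u v" for u v unfolding f_def by simp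
  have circulation: "(\<Sum>v\<in>M. f u v) = 0" if "u \<in> M" for u
    using rationalized_stationary[OF MSC rat \<open>finite X\<close> \<open>menu X M\<close> that]
      stochastic_matrix.row_sum[OF stochastic_matrix_MSC[OF MSC \<open>finite X\<close> \<open>menu X M\<close>] that]
    unfolding f_def by (simp add: sum_subtractf sum_distrib_left[symmetric] mult.commute)
  have delta_pos: "0 < delta p M k l" if kl: "k \<in> M" "l \<in> M" and "0 < f k l" for k l
  proof -
    have "k \<noteq> l" using \<open>0 < f k l\<close> unfolding f_def by auto
    then obtain c where "0 \<le> c" "f k l = c * delta p M k l"
      using net_flow_nonneg_multiple_of_delta[OF MSC rat assms(1-3) kl] unfolding f_def by blast
    then show ?thesis using \<open>0 < f k l\<close> by (simp add: zero_less_mult_iff)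
  qed
  have "f i j = 0" if ij: "i \<in> M" "j \<in> M" for i j
  proof (rule ccontr)
    assume "f i j \<noteq> 0"
    then obtain xs where xs: "xs \<noteq> []" "distinct xs" "set xs \<subseteq> M" and pos: "\<forall>(k, l)\<in>cycle_pairs xs. 0 < f k l"
      using circulation_positive_cycle[OF finite_M anti circulation ij] by blast
    have "k \<in> M \<and> l \<in> M" if "(k, l) \<in> cycle_pairs xs" for k l
      using that \<open>set xs \<subseteq> M\<close> cycle_pairs_subset[of xs] by auto
    then have delta_pos_cycle: "0 < delta p M k l" if "(k, l) \<in> cycle_pairs xs" for k l
      using that pos delta_pos by blast
    then have "sign_consistent p M xs" unfolding sign_consistent_def by clarsimp
    then have "\<forall>(k, l)\<in>cycle_pairs xs. delta p M k l = 0" using no_cycle xs by blast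
    moreover obtain k l where "(k, l) \<in> cycle_pairs xs" using cycle_pairs_nonempty[OF \<open>xs \<noteq> []\<close>] by auto
    ultimately show False using delta_pos_cycle by fastforce
  qed
  then show ?thesis
    using reversible_iff_detailed_balance[OF rat \<open>menu X M\<close>] unfolding f_def by simp
qed

section \<open>A pairwise chain rationalizing a choice function\<close>

text \<open>Jumps from i to j at rate w_N(i,j) p(j,{i,j}): for symmetric w this satisfies (A3), and the net
  flow from i to j becomes w_N(i,j) delta_ij(N).\<close>

definition pair_chain :: "('a \<Rightarrow> 'a set \<Rightarrow> real) \<Rightarrow> ('a set \<Rightarrow> 'a \<Rightarrow> 'a \<Rightarrow> real) \<Rightarrow> 'a set \<Rightarrow> 'a \<Rightarrow> 'a \<Rightarrow> real"
  where "pair_chain p w N i j =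
    (if i = j then 1 - (\<Sum>k\<in>N - {i}. w N i k * p k {i, k}) else w N i j * p j {i, j})"

lemma MSC_pair_chain:
  assumes sc: "stoch_choice X p"
    and w_sym: "\<And>N i j. w N j i = w N i j" and w_nonneg: "\<And>N i j. 0 \<le> w N i j"
    and w_pair: "\<And>i j. 0 < w {i, j} i j"
    and w_row: "\<And>N i. menu X N \<Longrightarrow> i \<in> N \<Longrightarrow> (\<Sum>k\<in>N - {i}. w N i k * p k {i, k}) < 1"
  shows "MSC X (pair_chain p w) (\<lambda>N i. p i N)"
  unfolding MSC_def
proof (intro allI impI conjI ballI)
  fix N assume N: "menu X N"
  then have NX: "N \<subseteq> X" unfolding menu_def by auto
  show "(\<Sum>i\<in>N. p i N) = 1" using sc N unfolding stoch_choice_def by blast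
  fix i assume i: "i \<in> N"
  show "0 \<le> p i N" using sc N i NX unfolding stoch_choice_def by blast
  show "0 < pair_chain p w N i i" using w_row[OF N i] by (simp add: pair_chain_def)
  have "(\<Sum>k\<in>N - {i}. pair_chain p w N i k) = (\<Sum>k\<in>N - {i}. w N i k * p k {i, k})"
    by (rule sum.cong) (auto simp: pair_chain_def)
  then show "pair_chain p w N i i = 1 - (\<Sum>k\<in>N - {i}. pair_chain p w N i k)"
    by (simp add: pair_chain_def)
  fix j assume j: "j \<in> N"
  show "0 \<le> pair_chain p w N i j"
  proof (cases "i = j")
    case True then show ?thesis using w_row[OF N i] by (simp add: pair_chain_def)
  next
    case False then show ?thesis
      using stoch_choice_pair[OF sc, of i j] i j NX w_nonneg
      by (auto simp: pair_chain_def intro!: mult_nonneg_nonneg)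
  qed
  assume "i \<noteq> j"
  have pair: "p i {i, j} + p j {i, j} = 1" using stoch_choice_pair[OF sc, of i j] i j NX \<open>i \<noteq> j\<close> by auto
  show "0 < pair_chain p w {i, j} j i" if "pair_chain p w {i, j} i j = 0"
    using that w_pair[of i j] w_pair[of j i] pair \<open>i \<noteq> j\<close> by (auto simp: pair_chain_def insert_commute)
  show "pair_chain p w {i, j} i j * pair_chain p w N j i = pair_chain p w {i, j} j i * pair_chain p w N i j"
    using \<open>i \<noteq> j\<close> w_sym[of "{i, j}" i j] w_sym[of N i j] by (simp add: pair_chain_def insert_commute)
qed

lemma pair_chain_net_flow:
  assumes "i \<noteq> j" "w N j i = w N i j"
  shows "p i N * pair_chain p w N i j - p j N * pair_chain p w N j i = w N i j * delta p N i j"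
  using assms unfolding pair_chain_def delta_def by (simp add: insert_commute algebra_simps)

lemma pair_chain_stationary:
  assumes "finite N" "j \<in> N" and w_sym: "\<And>i. w N j i = w N i j"
    and balance: "(\<Sum>i\<in>N. w N i j * delta p N i j) = 0"
  shows "(\<Sum>i\<in>N. p i N * pair_chain p w N i j) = p j N"
proof -
  have flow: "p i N * pair_chain p w N i j - p j N * pair_chain p w N j i = w N i j * delta p N i j"
    if "i \<noteq> j" for i
    using pair_chain_net_flow[where w = w and N = N, OF that w_sym[of i]] .
  have "(\<Sum>i\<in>N. p i N * pair_chain p w N i j)
      = p j N * pair_chain p w N j j + (\<Sum>i\<in>N - {j}. p i N * pair_chain p w N i j)"
    by (rule sum.remove[OF assms(1,2)])
  also have "p j N * pair_chain p w N j j = p j N - (\<Sum>i\<in>N - {j}. p j N * pair_chain p w N j i)"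
  proof -
    have "(\<Sum>i\<in>N - {j}. pair_chain p w N j i) = (\<Sum>i\<in>N - {j}. w N j i * p i {j, i})"
      by (rule sum.cong) (auto simp: pair_chain_def)
    then show ?thesis by (simp add: pair_chain_def sum_distrib_left[symmetric] right_diff_distrib)
  qed
  also have "p j N - (\<Sum>i\<in>N - {j}. p j N * pair_chain p w N j i) + (\<Sum>i\<in>N - {j}. p i N * pair_chain p w N i j)
      = p j N + (\<Sum>i\<in>N - {j}. w N i j * delta p N i j)"
    using flow by (simp add: sum_subtractf[symmetric])
  also have "(\<Sum>i\<in>N - {j}. w N i j * delta p N i j) = (\<Sum>i\<in>N. w N i j * delta p N i j)"
    using sum.remove[OF assms(1,2), of "\<lambda>i. w N i j * delta p N i j"] by (simp add: delta_def)
  finally show ?thesis using balance by simp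
qed

lemma rationalizes_pair_chain:
  assumes "finite X" and w_sym: "\<And>N i j. w N j i = w N i j"
    and balance: "\<And>N j. menu X N \<Longrightarrow> j \<in> N \<Longrightarrow> (\<Sum>i\<in>N. w N i j * delta p N i j) = 0"
  shows "rationalizes X p (pair_chain p w) (\<lambda>N i. p i N)"
  unfolding rationalizes_def
proof (intro allI impI ballI)
  fix N j assume "menu X N" "j \<in> N"
  have "finite N" using menu_finite \<open>finite X\<close> \<open>menu X N\<close> .
  have "(\<Sum>i\<in>N. p i N * pair_chain p w N i j) = p j N" if "j \<in> N" for j
    by (rule pair_chain_stationary[where w = w, OF \<open>finite N\<close> that w_sym balance[OF \<open>menu X N\<close> that]])
  from rho_stationary_initial[OF \<open>finite N\<close> this \<open>j \<in> N\<close>]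
  show "p j N = rho N (\<lambda>i. p i N) (pair_chain p w N) j" by simp
qed

text \<open>Weight 1/2 on binary menus secures (A2); the perturbation g on the menu M is meant to be
  small, to keep the diagonal of the chain positive.\<close>

definition perturbed_pair_weight :: "'a set \<Rightarrow> ('a \<Rightarrow> 'a \<Rightarrow> real) \<Rightarrow> 'a set \<Rightarrow> 'a \<Rightarrow> 'a \<Rightarrow> real"
  where "perturbed_pair_weight M g N i j = (if N = {i, j} then 1/2 else 0) + (if N = M then g i j else 0)"

lemma sum_pair_menu_half_le: "(\<Sum>k\<in>N - {i}. if N = {i, k} then 1/2 else 0) \<le> (1/2 :: real)"
proof (cases "\<exists>k. k \<noteq> i \<and> N = {i, k}")
  case True
  then obtain k where "k \<noteq> i" "N = {i, k}" by blast
  then have "N - {i} = {k}" by auto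
  then show ?thesis using \<open>N = {i, k}\<close> by simp
next
  case False
  then have "(\<Sum>k\<in>N - {i}. if N = {i, k} then 1/2 else 0) = (0::real)" by (intro sum.neutral) auto
  then show ?thesis by simp
qed

lemma perturbed_pair_weight_row_sum:
  assumes sc: "stoch_choice X p" and N: "menu X N" and i: "i \<in> N"
    and g_nonneg: "\<And>i j. 0 \<le> g i j" and g_small: "i \<in> M \<Longrightarrow> (\<Sum>k\<in>M - {i}. g i k) \<le> 1/4"
  shows "(\<Sum>k\<in>N - {i}. perturbed_pair_weight M g N i k * p k {i, k}) < 1"
proof -
  have "p k {i, k} \<le> 1" if "k \<in> N" for k
    using stoch_choice_bounds[OF sc, of "{i, k}" k] N i that unfolding menu_def by auto
  then have "(\<Sum>k\<in>N - {i}. perturbed_pair_weight M g N i k * p k {i, k})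
      \<le> (\<Sum>k\<in>N - {i}. perturbed_pair_weight M g N i k)"
    using g_nonneg by (intro sum_mono mult_left_le) (auto simp: perturbed_pair_weight_def)
  also have "\<dots> = (\<Sum>k\<in>N - {i}. if N = {i, k} then 1/2 else 0) + (if N = M then \<Sum>k\<in>M - {i}. g i k else 0)"
    unfolding perturbed_pair_weight_def by (simp add: sum.distrib)
  also have "\<dots> \<le> 1/2 + 1/4"
    using sum_pair_menu_half_le[of N i] g_small i by (intro add_mono) auto
  finally show ?thesis by simp
qed

lemma perturbed_pair_weight_balance:
  assumes g_balance: "\<And>j. j \<in> M \<Longrightarrow> (\<Sum>i\<in>M. g i j * delta p M i j) = 0" and "j \<in> N"
  shows "(\<Sum>i\<in>N. perturbed_pair_weight M g N i j * delta p N i j) = 0"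
proof -
  \<comment> \<open>on a binary menu delta vanishes, so only the perturbation on M contributes\<close>
  have terms: "perturbed_pair_weight M g N i j * delta p N i j = (if N = M then g i j * delta p M i j else 0)"
    for i
    using delta_pair[of p i j] by (cases "N = {i, j}") (auto simp: perturbed_pair_weight_def)
  show ?thesis
    unfolding sum.cong[OF refl terms] using g_balance \<open>j \<in> N\<close> by (cases "N = M") simp_all
qed

lemma small_scaling_of_row_sums:
  fixes g :: "'a \<Rightarrow> 'a \<Rightarrow> real"
  assumes "finite M" and g_nonneg: "\<And>i j. 0 \<le> g i j"
  obtains \<epsilon> where "0 < \<epsilon>" "\<And>i. i \<in> M \<Longrightarrow> (\<Sum>k\<in>M - {i}. \<epsilon> * g i k) \<le> 1/4"
proof -
  define G where "G = (\<Sum>i\<in>M. \<Sum>k\<in>M. g i k)"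
  define \<epsilon> where "\<epsilon> = 1 / (4 * (1 + G))"
  have "0 \<le> G" unfolding G_def using g_nonneg by (simp add: sum_nonneg)
  then have "0 < \<epsilon>" "\<epsilon> * G \<le> 1/4" unfolding \<epsilon>_def by (simp_all add: field_simps)
  moreover have "(\<Sum>k\<in>M - {i}. \<epsilon> * g i k) \<le> 1/4" if "i \<in> M" for i
  proof -
    have "(\<Sum>k\<in>M - {i}. g i k) \<le> (\<Sum>k\<in>M. g i k)"
      using \<open>finite M\<close> g_nonneg by (intro sum_mono2) auto
    also have "\<dots> \<le> G"
      unfolding G_def using \<open>finite M\<close> g_nonneg that by (intro member_le_sum) (auto intro: sum_nonneg)
    finally have "\<epsilon> * (\<Sum>k\<in>M - {i}. g i k) \<le> \<epsilon> * G"
      using \<open>0 < \<epsilon>\<close> by (simp add: mult_left_mono)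
    then show ?thesis using \<open>\<epsilon> * G \<le> 1/4\<close> by (simp add: sum_distrib_left)
  qed
  ultimately show ?thesis using that by blast
qed

lemma weighted_delta_zero_if_all_reversible:
  assumes "finite X" and sc: "stoch_choice X p" and M: "menu X M"
    and all_reversible: "\<forall>Q \<nu>. MSC X Q \<nu> \<and> rationalizes X p Q \<nu> \<longrightarrow> reversible M Q \<nu>"
    and g_sym: "\<And>i j. g j i = g i j" and g_nonneg: "\<And>i j. 0 \<le> g i j"
    and g_balance: "\<And>j. j \<in> M \<Longrightarrow> (\<Sum>i\<in>M. g i j * delta p M i j) = 0"
    and ab: "a \<in> M" "b \<in> M"
  shows "g a b * delta p M a b = 0"
proof -
  obtain \<epsilon> where "0 < \<epsilon>" and small: "\<And>i. i \<in> M \<Longrightarrow> (\<Sum>k\<in>M - {i}. \<epsilon> * g i k) \<le> 1/4"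
    using small_scaling_of_row_sums[of M g, OF menu_finite[OF \<open>finite X\<close> M] g_nonneg] by blast
  define w where "w = perturbed_pair_weight M (\<lambda>i j. \<epsilon> * g i j)"
  have w_sym: "w N j i = w N i j" for N i j
    unfolding w_def perturbed_pair_weight_def using g_sym by (simp add: insert_commute)
  have w_nonneg: "0 \<le> w N i j" for N i j
    unfolding w_def perturbed_pair_weight_def using \<open>0 < \<epsilon>\<close> g_nonneg by simp
  have w_pair: "0 < w {i, j} i j" for i j
    unfolding w_def perturbed_pair_weight_def using \<open>0 < \<epsilon>\<close> g_nonneg by (simp add: add_pos_nonneg)
  have w_row: "(\<Sum>k\<in>N - {i}. w N i k * p k {i, k}) < 1" if "menu X N" "i \<in> N" for N i
    unfolding w_def using \<open>0 < \<epsilon>\<close> g_nonneg small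
    by (intro perturbed_pair_weight_row_sum[OF sc that]) simp_all
  have balance: "(\<Sum>i\<in>N. w N i j * delta p N i j) = 0" if "j \<in> N" for N j
    unfolding w_def using g_balance that
    by (intro perturbed_pair_weight_balance) (simp_all add: mult.assoc sum_distrib_left[symmetric])
  have rat: "rationalizes X p (pair_chain p w) (\<lambda>N i. p i N)"
    by (rule rationalizes_pair_chain[OF \<open>finite X\<close> w_sym]) (simp add: balance)
  with all_reversible MSC_pair_chain[OF sc w_sym w_nonneg w_pair w_row]
  have "p a M * pair_chain p w M a b = p b M * pair_chain p w M b a"
    using reversible_iff_detailed_balance[OF rat M] ab by blast
  then have "a \<noteq> b \<Longrightarrow> w M a b * delta p M a b = 0"
    using pair_chain_net_flow[of a b w M p] w_sym by simp
  moreover have "\<epsilon> * g a b \<le> w M a b" unfolding w_def perturbed_pair_weight_def by simp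
  ultimately show ?thesis
    using \<open>0 < \<epsilon>\<close> g_nonneg[of a b] w_nonneg[of M a b] unfolding delta_def
    by (cases "a = b") (auto simp: mult_le_0_iff)
qed

theorem delta_zero_on_sign_consistent_cycle_if_all_reversible:
  assumes "finite X" "stoch_choice X p" "menu X M"
    and all_reversible: "\<forall>Q \<nu>. MSC X Q \<nu> \<and> rationalizes X p Q \<nu> \<longrightarrow> reversible M Q \<nu>"
    and xs: "distinct xs" "set xs \<subseteq> M" "sign_consistent p M xs" and kl: "(k, l) \<in> cycle_pairs xs"
  shows "delta p M k l = 0"
proof (rule ccontr)
  assume nonzero: "delta p M k l \<noteq> 0"
  have sign: "sgn (delta p M k' l') = sgn (delta p M k l)" if "(k', l') \<in> cycle_pairs xs" for k' l'
    using \<open>sign_consistent p M xs\<close> that kl unfolding sign_consistent_def by fastforce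
  have "sgn (delta p M k l) \<noteq> 0" using nonzero by (simp add: sgn_real_def)
  obtain g where "\<forall>i j. g j i = g i j" "\<forall>i j. 0 \<le> g i j"
    and "\<forall>j\<in>M. (\<Sum>i\<in>M. g i j * delta p M i j) = 0" and "\<forall>(k, l)\<in>cycle_pairs xs. 0 < g k l"
    using cycle_balancing_weights[where d = "delta p M" and \<sigma> = "sgn (delta p M k l)",
        OF menu_finite[OF assms(1,3)] xs(1,2) delta_swap sign
        \<open>sgn (delta p M k l) \<noteq> 0\<close>]
    by blast
  moreover have "a \<in> M" "b \<in> M" if "(a, b) \<in> cycle_pairs xs" for a b
    using that cycle_pairs_subset[of xs] xs(2) by auto
  ultimately have "g k l * delta p M k l = 0" "0 < g k l"
    using weighted_delta_zero_if_all_reversible[OF assms(1-4), of g] kl by auto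
  then show False using nonzero by simp
qed

theorem theorem1:
  fixes X :: "'a set" and p :: "'a \<Rightarrow> 'a set \<Rightarrow> real" and M :: "'a set"
  assumes "finite X"
    and "stoch_choice X p"
    and "menu X M"
  shows "(\<forall>Q \<nu>. MSC X Q \<nu> \<and> rationalizes X p Q \<nu> \<longrightarrow> reversible M Q \<nu>)
     \<longleftrightarrow>
     (\<forall>xs. xs \<noteq> [] \<and> distinct xs \<and> set xs \<subseteq> M \<and> sign_consistent p M xs \<longrightarrow>
        (\<forall>(k, l)\<in>cycle_pairs xs. delta p M k l = 0))"
proof
  assume "\<forall>Q \<nu>. MSC X Q \<nu> \<and> rationalizes X p Q \<nu> \<longrightarrow> reversible M Q \<nu>"
  then show "\<forall>xs. xs \<noteq> [] \<and> distinct xs \<and> set xs \<subseteq> M \<and> sign_consistent p M xs \<longrightarrow>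
      (\<forall>(k, l)\<in>cycle_pairs xs. delta p M k l = 0)"
    using delta_zero_on_sign_consistent_cycle_if_all_reversible[OF assms] by fast
next
  assume "\<forall>xs. xs \<noteq> [] \<and> distinct xs \<and> set xs \<subseteq> M \<and> sign_consistent p M xs \<longrightarrow>
      (\<forall>(k, l)\<in>cycle_pairs xs. delta p M k l = 0)"
  then show "\<forall>Q \<nu>. MSC X Q \<nu> \<and> rationalizes X p Q \<nu> \<longrightarrow> reversible M Q \<nu>"
    using reversible_if_no_sign_consistent_cycle[OF assms] by blast
qed

end
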